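(* Let $Q_0,\beta_1,\beta_2,\beta_3,c_1,c_2,c_3,\theta,\pi,\delta,\alpha,\mu$ be positive constants and $u_1\in[0,1]$ a constant. Consider the system \[ \begin{aligned} S' &= Q_0-\beta_m S-\mu S,\\ I_1' &= \beta_m S-(\theta+\mu+\delta)I_1,\\ I_2' &= \theta I_1-(\delta+\mu+\pi)I_2,\\ A' &= \delta I_1+\delta I_2+\pi I_2-(\alpha+\mu)A, \end{aligned} \qquad \beta_m=\frac{(1-u_1)(\beta_1c_1I_1+\beta_2c_2I_2+\beta_3c_3A)}{N},\quad N=S+I_1+I_2+A, \] and define $R_0=\zeta_1+\zeta_2+\zeta_3+\zeta_4$ with \[ \zeta_1=\frac{(1-u_1)\beta_1c_1}{\theta+\delta+\mu},\quad \zeta_2=\frac{(1-u_1)\beta_2c_2\theta}{(\theta+\delta+\mu)(\delta+\mu+\pi)},\quad \zeta_3=\frac{(1-u_1)\beta_3c_3\theta(\delta+\pi)}{(\theta+\delta+\mu)(\delta+\mu+\pi)(\alpha+\mu)},\quad \zeta_4=\frac{(1-u_1)\beta_3c_3\delta}{(\theta+\delta+\mu)(\alpha+\mu)}. \] If $R_0<1$, then the disease-free equilibrium $E_0=(Q_0/\mu,0,0,0)$ is locally asymptotically stable.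
   Context: $S$ denotes susceptibles, $I_1$ unaware infectives, $I_2$ aware infectives, $A$ individuals with AIDS; $N$ is the total population. *)

theory Defs
  imports "HOL-Analysis.Analysis"
begin

type_synonym state = "real \<times> real \<times> real \<times> real"  (* (S, I1, I2, A) *)

text \<open>Right-hand side of the HIV/AIDS model with parameters
  Q0 b1 b2 b3 c1 c2 c3 th p dl al mu u1 (p stands for the paper's pi).\<close>
definition hiv_field ::
  "real \<Rightarrow> real \<Rightarrow> real \<Rightarrow> real \<Rightarrow> real \<Rightarrow> real \<Rightarrow> real \<Rightarrow> real \<Rightarrow> real \<Rightarrow> real \<Rightarrow> real \<Rightarrow> real \<Rightarrow> real
   \<Rightarrow> state \<Rightarrow> state" where
  "hiv_field Q0 b1 b2 b3 c1 c2 c3 th p dl al mu u1 x =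
     (case x of (S, I1, I2, A) \<Rightarrow>
       let N = S + I1 + I2 + A;
           bm = (1 - u1) * (b1 * c1 * I1 + b2 * c2 * I2 + b3 * c3 * A) / N
       in (Q0 - bm * S - mu * S,
           bm * S - (th + mu + dl) * I1,
           th * I1 - (dl + mu + p) * I2,
           dl * I1 + dl * I2 + p * I2 - (al + mu) * A))"

definition is_solution_on :: "(state \<Rightarrow> state) \<Rightarrow> (real \<Rightarrow> state) \<Rightarrow> real set \<Rightarrow> bool" where
  "is_solution_on F x T \<longleftrightarrow> (\<forall>t\<in>T. (x has_vector_derivative F (x t)) (at t within T))"

text \<open>Local asymptotic stability (Lyapunov) of an equilibrium e of x' = F x:
  stability (solutions starting close stay close, on whatever interval [0,T] they exist)
  plus local attractivity (global forward solutions starting close converge to e).\<close>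
definition locally_asymptotically_stable :: "(state \<Rightarrow> state) \<Rightarrow> state \<Rightarrow> bool" where
  "locally_asymptotically_stable F e \<longleftrightarrow>
     F e = 0 \<and>
     (\<forall>\<epsilon>>0. \<exists>\<delta>>0. \<forall>x T. is_solution_on F x {0..T} \<and> dist (x 0) e < \<delta> \<longrightarrow>
          (\<forall>t\<in>{0..T}. dist (x t) e < \<epsilon>)) \<and>
     (\<exists>\<eta>>0. \<forall>x. is_solution_on F x {0..} \<and> dist (x 0) e < \<eta> \<longrightarrow> (x \<longlongrightarrow> e) at_top)"

end

theory Submission
  imports Defs "HOL-Real_Asymp.Real_Asymp"
begin

(* Near E0 = (S0, 0, 0, 0) the infected compartments y = (I1, I2, A) satisfy
   y' = M y + (S/N - 1) Phi(y) e1, where M is the Metzler infection matrix and Phi the force of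
   infection.  R0 < 1 yields explicit positive vectors v, w with M v < 0 and w^T M < 0; with the
   diagonal weights d_i = w_i / v_i, Young's inequality on the off-diagonal entries gives
   sum_i d_i y_i (M y)_i <= -kappa |y|^2.  Hence W = K (S - S0)^2 + sum_i d_i y_i^2 with small K
   satisfies W' <= -c W on a ball around E0, where S/N is close to 1.  A comparison argument keeps
   solutions starting near E0 inside that ball, and W then decays exponentially along them. *)

section \<open>Diagonal Lyapunov functions of Metzler matrices\<close>

lemma weighted_amgm:
  fixes vi vj yi yj :: real
  assumes "vi > 0" "vj > 0"
  shows "yi * yj / vi \<le> vj * yi^2 / (2 * vi^2) + yj^2 / (2 * vj)"
proof -
  have "0 \<le> (vj * yi - vi * yj)^2 / (2 * vi^2 * vj)"
    using assms by simp
  then show ?thesis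
    using assms by (simp add: field_simps power2_eq_square)
qed

lemma metzler_weighted_form_le:
  fixes a :: "'i \<Rightarrow> 'i \<Rightarrow> real" and v w y :: "'i \<Rightarrow> real"
  assumes I: "finite I" and v: "\<And>i. i \<in> I \<Longrightarrow> v i > 0" and w: "\<And>i. i \<in> I \<Longrightarrow> w i \<ge> 0"
    and metzler: "\<And>i j. i \<in> I \<Longrightarrow> j \<in> I \<Longrightarrow> i \<noteq> j \<Longrightarrow> a i j \<ge> 0"
  shows "(\<Sum>i\<in>I. w i / v i * y i * (\<Sum>j\<in>I. a i j * y j))
    \<le> (\<Sum>i\<in>I. (w i * (\<Sum>j\<in>I. a i j * v j) / (2 * v i^2)
                 + (\<Sum>j\<in>I. w j * a j i) / (2 * v i)) * y i^2)"
    (is "_ \<le> ?rhs")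
proof -
  have pairwise: "w i / v i * y i * (a i j * y j)
      \<le> w i * a i j * v j * y i^2 / (2 * v i^2) + w i * a i j * y j^2 / (2 * v j)"
    if "i \<in> I" "j \<in> I" for i j
  proof (cases "i = j")
    case True
    with v[OF that(1)] show ?thesis
      by (simp add: field_simps power2_eq_square)
  next
    case False
    have "w i * a i j \<ge> 0"
      using that False w metzler by simp
    from mult_left_mono[OF weighted_amgm[OF v v, of i j "y i" "y j"] this] that
    show ?thesis
      by (simp add: algebra_simps)
  qed
  have swap: "(\<Sum>i\<in>I. \<Sum>j\<in>I. w i * a i j * y j^2 / (2 * v j))
      = (\<Sum>i\<in>I. (\<Sum>j\<in>I. w j * a j i) / (2 * v i) * y i^2)"
    by (subst sum.swap) (simp add: sum_distrib_right sum_divide_distrib)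
  have "(\<Sum>i\<in>I. w i / v i * y i * (\<Sum>j\<in>I. a i j * y j))
      = (\<Sum>i\<in>I. \<Sum>j\<in>I. w i / v i * y i * (a i j * y j))"
    by (simp add: sum_distrib_left)
  also have "\<dots> \<le> (\<Sum>i\<in>I. \<Sum>j\<in>I. w i * a i j * v j * y i^2 / (2 * v i^2))
      + (\<Sum>i\<in>I. \<Sum>j\<in>I. w i * a i j * y j^2 / (2 * v j))"
    using pairwise by (simp add: sum.distrib[symmetric] sum_mono)
  also have "\<dots> = ?rhs"
    unfolding swap
    by (simp add: sum.distrib sum_distrib_left sum_distrib_right sum_divide_distrib algebra_simps)
  finally show ?thesis .
qed

lemma metzler_diagonal_lyapunov:
  fixes a :: "'i \<Rightarrow> 'i \<Rightarrow> real" and v w :: "'i \<Rightarrow> real"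
  assumes I: "finite I" and v: "\<And>i. i \<in> I \<Longrightarrow> v i > 0" and w: "\<And>i. i \<in> I \<Longrightarrow> w i > 0"
    and metzler: "\<And>i j. i \<in> I \<Longrightarrow> j \<in> I \<Longrightarrow> i \<noteq> j \<Longrightarrow> a i j \<ge> 0"
    and row: "\<And>i. i \<in> I \<Longrightarrow> (\<Sum>j\<in>I. a i j * v j) < 0"
    and col: "\<And>i. i \<in> I \<Longrightarrow> (\<Sum>j\<in>I. w j * a j i) < 0"
  obtains \<kappa> where "\<kappa> > 0"
    "\<And>y. (\<Sum>i\<in>I. w i / v i * y i * (\<Sum>j\<in>I. a i j * y j)) \<le> - \<kappa> * (\<Sum>i\<in>I. y i^2)"
proof
  define c where "c i = w i * (\<Sum>j\<in>I. a i j * v j) / (2 * v i^2) + (\<Sum>j\<in>I. w j * a j i) / (2 * v i)"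
    for i
  have c_neg: "c i < 0" if "i \<in> I" for i
    using v[OF that] w[OF that] row[OF that] col[OF that]
    by (simp add: c_def add_neg_neg mult_pos_neg divide_neg_pos)
  define \<kappa> where "\<kappa> = Min (insert 1 ((\<lambda>i. - c i) ` I))"
  show "\<kappa> > 0"
    unfolding \<kappa>_def using I c_neg by (simp add: Min_gr_iff)
  have c_le: "c i \<le> - \<kappa>" if "i \<in> I" for i
  proof -
    have "\<kappa> \<le> - c i"
      unfolding \<kappa>_def using I that by (intro Min_le) auto
    then show ?thesis by simp
  qed
  fix y :: "'i \<Rightarrow> real"
  have "(\<Sum>i\<in>I. w i / v i * y i * (\<Sum>j\<in>I. a i j * y j)) \<le> (\<Sum>i\<in>I. c i * y i^2)"
    unfolding c_def using metzler_weighted_form_le[OF I v less_imp_le[OF w] metzler] .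
  also have "\<dots> \<le> (\<Sum>i\<in>I. - \<kappa> * y i^2)"
    using c_le by (intro sum_mono mult_right_mono) auto
  finally show "(\<Sum>i\<in>I. w i / v i * y i * (\<Sum>j\<in>I. a i j * y j)) \<le> - \<kappa> * (\<Sum>i\<in>I. y i^2)"
    by (simp add: sum_distrib_left)
qed

section \<open>Lyapunov's direct method with exponential decay\<close>

lemma exp_decay_of_deriv_le:
  fixes g D :: "real \<Rightarrow> real"
  assumes der: "\<And>s. s \<in> {0..T} \<Longrightarrow> (g has_real_derivative D s) (at s within {0..T})"
    and t: "t \<in> {0..T}" and decay: "\<And>s. 0 < s \<Longrightarrow> s < t \<Longrightarrow> D s \<le> - c * g s"
  shows "g t \<le> g 0 * exp (- c * t)"
proof -
  define h where "h s = g s * exp (c * s)" for s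
  have h_deriv: "(h has_real_derivative (D s + c * g s) * exp (c * s)) (at s)"
    if "0 < s" "s < t" for s
  proof -
    have "s \<in> interior {0..T}"
      using that t by auto
    then have "(g has_real_derivative D s) (at s)"
      using der[of s] at_within_interior[of s "{0..T}"] interior_subset by auto
    then show ?thesis
      unfolding h_def by (auto intro!: derivative_eq_intros simp: algebra_simps)
  qed
  have "continuous_on {0..T} g"
    using der by (meson DERIV_continuous continuous_on_eq_continuous_within)
  then have "continuous_on {0..t} h"
    unfolding h_def using t by (auto intro!: continuous_intros elim: continuous_on_subset)
  moreover have "(D s + c * g s) * exp (c * s) \<le> 0" if "0 < s" "s < t" for s
    using decay[OF that] by (simp add: mult_nonpos_nonneg)
  ultimately have "h t \<le> h 0"
    using t h_deriv by (intro DERIV_nonpos_imp_decreasing_open[of 0 t h]) auto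
  then show ?thesis
    unfolding h_def by (simp add: field_simps exp_minus)
qed

lemma exp_decay_below_barrier:
  fixes g D :: "real \<Rightarrow> real"
  assumes der: "\<And>s. s \<in> {0..T} \<Longrightarrow> (g has_real_derivative D s) (at s within {0..T})"
    and decay: "\<And>s. s \<in> {0..T} \<Longrightarrow> g s < B \<Longrightarrow> D s \<le> - c * g s"
    and "c \<ge> 0" "0 \<le> g 0" "g 0 < B" and t: "t \<in> {0..T}"
  shows "g t < B" "g t \<le> g 0 * exp (- c * t)"
proof -
  have below: "g s < B" if "s \<in> {0..T}" for s
  proof (rule ccontr)
    assume "\<not> g s < B"
    define Z where "Z = {0..T} \<inter> g -` {B..}"
    have "Z \<noteq> {}" "bdd_below Z"
      using that \<open>\<not> g s < B\<close> unfolding Z_def by (auto intro: bdd_belowI[of _ 0])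
    moreover have "continuous_on {0..T} g"
      using der by (meson DERIV_continuous continuous_on_eq_continuous_within)
    then have "closed Z"
      unfolding Z_def by (intro continuous_closed_preimage) auto
    ultimately have Z_first: "Inf Z \<in> Z"
      by (rule closed_contains_Inf)
    have "D r \<le> - c * g r" if "0 < r" "r < Inf Z" for r
    proof -
      have "r \<notin> Z"
        using that \<open>bdd_below Z\<close> cInf_lower[of r Z] by auto
      moreover have "r \<in> {0..T}"
        using that Z_first unfolding Z_def by auto
      ultimately show ?thesis
        using decay unfolding Z_def by auto
    qed
    then have "g (Inf Z) \<le> g 0 * exp (- c * Inf Z)"
      using Z_first unfolding Z_def by (intro exp_decay_of_deriv_le[OF der]) auto
    also have "\<dots> \<le> g 0"
      using assms Z_first unfolding Z_def by (intro mult_left_le) auto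
    finally show False
      using Z_first \<open>g 0 < B\<close> unfolding Z_def by auto
  qed
  then show "g t < B"
    using t .
  show "g t \<le> g 0 * exp (- c * t)"
    using t below decay by (intro exp_decay_of_deriv_le[OF der]) auto
qed

locale exponential_lyapunov =
  fixes F :: "state \<Rightarrow> state" and e :: state
    and W :: "state \<Rightarrow> real" and W' :: "state \<Rightarrow> state \<Rightarrow> real" and m M \<rho> c :: real
  assumes equilibrium: "F e = 0"
    and W_lower: "\<And>z. m * (dist z e)^2 \<le> W z" and W_upper: "\<And>z. W z \<le> M * (dist z e)^2"
    and W_deriv: "\<And>z. (W has_derivative W' z) (at z)"
    and W_decay: "\<And>z. dist z e < \<rho> \<Longrightarrow> W' z (F z) \<le> - c * W z"
    and m_pos: "m > 0" and \<rho>_pos: "\<rho> > 0" and c_pos: "c > 0"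
begin

lemma M_pos: "M > 0"
proof -
  have "dist (fst e + 1, snd e) e = 1"
    by (cases e) (simp add: dist_Pair_Pair dist_real_def)
  then show ?thesis
    using W_lower[of "(fst e + 1, snd e)"] W_upper[of "(fst e + 1, snd e)"] m_pos by simp
qed

lemma W_nonneg: "W z \<ge> 0"
proof -
  have "0 \<le> m * (dist z e)^2"
    using m_pos by simp
  then show ?thesis
    using W_lower order_trans by blast
qed

lemma dist_less_if_W_less:
  assumes "W z < m * \<eta>^2" "\<eta> > 0"
  shows "dist z e < \<eta>"
proof -
  have "m * (dist z e)^2 < m * \<eta>^2"
    using W_lower[of z] assms(1) by linarith
  then show ?thesis
    using m_pos assms(2) by (simp add: power_less_imp_less_base)
qed

lemma W_less_if_dist_less:
  assumes "dist z e < \<eta> * sqrt (m / M)"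
  shows "W z < m * \<eta>^2"
proof -
  have "(dist z e)^2 < (\<eta> * sqrt (m / M))^2"
    using assms by (intro power_strict_mono) auto
  also have "\<dots> = \<eta>^2 * m / M"
    using m_pos M_pos by (simp add: power_mult_distrib)
  finally have "M * (dist z e)^2 < m * \<eta>^2"
    using M_pos by (simp add: field_simps)
  then show ?thesis
    using W_upper[of z] by linarith
qed

lemma W_along_solution:
  assumes "is_solution_on F x T" "t \<in> T"
  shows "((\<lambda>t. W (x t)) has_real_derivative W' (x t) (F (x t))) (at t within T)"
proof -
  have "(x has_derivative (\<lambda>h. h *\<^sub>R F (x t))) (at t within T)"
    using assms unfolding is_solution_on_def has_vector_derivative_def by blast
  from has_derivative_compose[OF this W_deriv]
  have "((\<lambda>t. W (x t)) has_derivative (\<lambda>h. W' (x t) (h *\<^sub>R F (x t)))) (at t within T)" .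
  moreover have "(\<lambda>h. W' (x t) (h *\<^sub>R F (x t))) = (*) (W' (x t) (F (x t)))"
    using linear_cmul[OF has_derivative_linear[OF W_deriv]] by (auto simp: mult.commute)
  ultimately show ?thesis
    by (simp add: has_field_derivative_def)
qed

lemma solution_stays_close:
  assumes sol: "is_solution_on F x {0..T}" and \<eta>: "0 < \<eta>" "\<eta> \<le> \<rho>"
    and start: "W (x 0) < m * \<eta>^2" and t: "t \<in> {0..T}"
  shows "dist (x t) e < \<eta>" "W (x t) \<le> W (x 0) * exp (- c * t)"
proof -
  have decay: "W' (x s) (F (x s)) \<le> - c * W (x s)" if "W (x s) < m * \<eta>^2" for s
    using W_decay dist_less_if_W_less[OF that \<eta>(1)] \<eta>(2) by simp
  note barrier = exp_decay_below_barrier[where g = "\<lambda>s. W (x s)", OF W_along_solution[OF sol] decay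
      less_imp_le[OF c_pos] W_nonneg start t]
  show "dist (x t) e < \<eta>"
    using dist_less_if_W_less[OF barrier(1) \<eta>(1)] .
  show "W (x t) \<le> W (x 0) * exp (- c * t)"
    using barrier(2) .
qed

lemma stable:
  assumes "\<epsilon> > 0"
  shows "\<exists>\<delta>>0. \<forall>x T. is_solution_on F x {0..T} \<and> dist (x 0) e < \<delta> \<longrightarrow>
           (\<forall>t\<in>{0..T}. dist (x t) e < \<epsilon>)"
proof (intro exI conjI allI impI ballI)
  define \<eta> where "\<eta> = min \<epsilon> \<rho>"
  have \<eta>: "0 < \<eta>" "\<eta> \<le> \<rho>" "\<eta> \<le> \<epsilon>"
    unfolding \<eta>_def using assms \<rho>_pos by auto
  show "\<eta> * sqrt (m / M) > 0"
    using \<eta> m_pos M_pos by simp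
  fix x T t
  assume "is_solution_on F x {0..T} \<and> dist (x 0) e < \<eta> * sqrt (m / M)" "t \<in> {0..T}"
  then have "dist (x t) e < \<eta>"
    using solution_stays_close(1)[OF _ \<eta>(1,2) W_less_if_dist_less] by blast
  then show "dist (x t) e < \<epsilon>"
    using \<eta>(3) by linarith
qed

lemma attractive:
  "\<exists>\<eta>>0. \<forall>x. is_solution_on F x {0..} \<and> dist (x 0) e < \<eta> \<longrightarrow> (x \<longlongrightarrow> e) at_top"
proof (intro exI conjI allI impI)
  show "\<rho> * sqrt (m / M) > 0"
    using \<rho>_pos m_pos M_pos by simp
  fix x
  assume x: "is_solution_on F x {0..} \<and> dist (x 0) e < \<rho> * sqrt (m / M)"
  have close: "eventually (\<lambda>t. dist (x t) e \<le> sqrt (W (x 0) / m * exp (- c * t))) at_top"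
  proof (rule eventually_at_top_linorderI)
    fix t :: real
    assume "t \<ge> 0"
    then have "is_solution_on F x {0..t}"
      using x unfolding is_solution_on_def
      by (auto intro: has_vector_derivative_within_subset[where S = "{0..}"])
    then have "W (x t) \<le> W (x 0) * exp (- c * t)"
      using solution_stays_close(2)[OF _ \<rho>_pos order_refl W_less_if_dist_less] x \<open>t \<ge> 0\<close> by auto
    then have "(dist (x t) e)^2 \<le> W (x 0) / m * exp (- c * t)"
      using W_lower[of "x t"] m_pos by (simp add: field_simps)
    then show "dist (x t) e \<le> sqrt (W (x 0) / m * exp (- c * t))"
      by (simp add: real_le_rsqrt)
  qed
  have "((\<lambda>t. exp (- c * t)) \<longlongrightarrow> 0) at_top"
    using c_pos by real_asymp
  then have bound_lim: "((\<lambda>t. sqrt (W (x 0) / m * exp (- c * t))) \<longlongrightarrow> 0) at_top"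
    using tendsto_real_sqrt[OF tendsto_mult_right_zero, of "\<lambda>t. exp (- c * t)" at_top "W (x 0) / m"]
    by simp
  have "((\<lambda>t. dist (x t) e) \<longlongrightarrow> 0) at_top"
    by (rule tendsto_sandwich[OF always_eventually close tendsto_const bound_lim]) simp
  then show "(x \<longlongrightarrow> e) at_top"
    by (rule tendsto_dist_iff[THEN iffD2])
qed

theorem locally_asymptotically_stable_equilibrium: "locally_asymptotically_stable F e"
  unfolding locally_asymptotically_stable_def using equilibrium stable attractive by blast

end

section \<open>The HIV/AIDS model near the disease-free equilibrium\<close>

lemma two_mult_le_abs_mult_sum_squares:
  fixes t y z :: real
  shows "2 * y * (t * z) \<le> \<bar>t\<bar> * (y^2 + z^2)"
proof -
  have "0 \<le> (\<bar>y\<bar> - \<bar>z\<bar>)^2"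
    by simp
  then have "2 * \<bar>y * z\<bar> \<le> y^2 + z^2"
    by (simp add: power2_eq_square algebra_simps abs_mult)
  have "2 * y * (t * z) \<le> \<bar>t * (2 * (y * z))\<bar>"
    by (metis abs_ge_self mult.assoc mult.left_commute)
  also have "\<dots> = \<bar>t\<bar> * (2 * \<bar>y * z\<bar>)"
    by (simp add: abs_mult)
  also have "\<dots> \<le> \<bar>t\<bar> * (y^2 + z^2)"
    using \<open>2 * \<bar>y * z\<bar> \<le> y^2 + z^2\<close> by (rule mult_left_mono) simp
  finally show ?thesis .
qed

lemma cross_term_le:
  fixes K mu s x :: real
  assumes "K > 0" "mu > 0"
  shows "- 2 * K * s * x \<le> K * mu * s^2 + K * x^2 / mu"
proof -
  have "0 \<le> K * (mu * s + x)^2 / mu"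
    using assms by simp
  then show ?thesis
    using assms by (simp add: field_simps power2_eq_square)
qed

lemma perturbed_lyapunov_estimate:
  fixes K mu kap C d s r Phi Q Y y :: real
  assumes "K > 0" "mu > 0" "d \<ge> 0" and Q: "Q \<le> - kap * Y" and Phi: "Phi^2 \<le> C * Y"
    and y: "y^2 \<le> Y" and r: "\<bar>r\<bar> \<le> 2"
    and K_small: "8 * K * C \<le> mu * kap" and r_close: "d * \<bar>r - 1\<bar> * (1 + C) \<le> kap / 2"
  shows "2 * K * s * (- mu * s - r * Phi) + 2 * Q + 2 * d * y * ((r - 1) * Phi)
    \<le> - K * mu * s^2 - kap * Y"
proof -
  have "Y \<ge> 0"
    using y by (meson order_trans zero_le_power2)
  have "r^2 \<le> 4"
    using r abs_le_square_iff[of r 2] by simp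
  then have "(r * Phi)^2 \<le> 4 * (C * Y)"
    using Phi by (simp add: power_mult_distrib mult_mono)
  then have "K * (r * Phi)^2 / mu \<le> (8 * K * C) * Y / (2 * mu)"
    using \<open>K > 0\<close> \<open>mu > 0\<close> by (simp add: divide_right_mono)
  also have "\<dots> \<le> (mu * kap) * Y / (2 * mu)"
    using K_small \<open>Y \<ge> 0\<close> \<open>mu > 0\<close> by (intro divide_right_mono mult_right_mono) auto
  also have "\<dots> = kap / 2 * Y"
    using \<open>mu > 0\<close> by simp
  finally have transmission: "- 2 * K * s * (r * Phi) \<le> K * mu * s^2 + kap / 2 * Y"
    using cross_term_le[OF \<open>K > 0\<close> \<open>mu > 0\<close>, of s "r * Phi"] by linarith
  have "2 * y * ((r - 1) * Phi) \<le> \<bar>r - 1\<bar> * ((1 + C) * Y)"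
    using two_mult_le_abs_mult_sum_squares[of y "r - 1" Phi] y Phi
      mult_left_mono[of "y^2 + Phi^2" "(1 + C) * Y" "\<bar>r - 1\<bar>"]
    by (simp add: distrib_right)
  then have "2 * d * y * ((r - 1) * Phi) \<le> d * \<bar>r - 1\<bar> * (1 + C) * Y"
    using mult_left_mono[OF _ \<open>d \<ge> 0\<close>] by (fastforce simp: mult_ac)
  also have "\<dots> \<le> kap / 2 * Y"
    using r_close \<open>Y \<ge> 0\<close> by (rule mult_right_mono)
  finally have ratio: "2 * d * y * ((r - 1) * Phi) \<le> kap / 2 * Y" .
  have "2 * K * s * (- mu * s - r * Phi) = - 2 * K * mu * s^2 + - 2 * K * s * (r * Phi)"
    by (simp add: algebra_simps power2_eq_square)
  then show ?thesis
    using transmission ratio Q by linarith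
qed

lemma dist_state_sq:
  fixes S I1 I2 A S' I1' I2' A' :: real
  shows "(dist (S, I1, I2, A) (S', I1', I2', A'))^2 = (S - S')^2 + (I1 - I1')^2 + (I2 - I2')^2 + (A - A')^2"
  by (simp add: dist_Pair_Pair dist_real_def)

lemma sum_three: "(\<Sum>i\<in>{0, 1, 2}. g i) = g 0 + g 1 + g (2::nat)"
  by (simp add: add.assoc)

locale hiv_model =
  fixes Q0 b1 b2 b3 c1 c2 c3 th p dl al mu u1 :: real
  assumes pos: "Q0 > 0" "b1 > 0" "b2 > 0" "b3 > 0" "c1 > 0" "c2 > 0" "c3 > 0"
      "th > 0" "p > 0" "dl > 0" "al > 0" "mu > 0"
    and u1: "0 \<le> u1" "u1 \<le> 1"
    and R0: "(1 - u1) * b1 * c1 / (th + dl + mu)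
           + (1 - u1) * b2 * c2 * th / ((th + dl + mu) * (dl + mu + p))
           + (1 - u1) * b3 * c3 * th * (dl + p) / ((th + dl + mu) * (dl + mu + p) * (al + mu))
           + (1 - u1) * b3 * c3 * dl / ((th + dl + mu) * (al + mu)) < 1"
begin

abbreviation F :: "state \<Rightarrow> state" where
  "F \<equiv> hiv_field Q0 b1 b2 b3 c1 c2 c3 th p dl al mu u1"

definition "S0 = Q0 / mu"
definition "f1 = (1 - u1) * b1 * c1"
definition "f2 = (1 - u1) * b2 * c2"
definition "f3 = (1 - u1) * b3 * c3"
definition "k1 = th + dl + mu"
definition "k2 = dl + mu + p"
definition "k3 = al + mu"

lemma rates_pos: "S0 > 0" "f1 \<ge> 0" "f2 \<ge> 0" "f3 \<ge> 0" "k1 > 0" "k2 > 0" "k3 > 0"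
  using pos u1 by (auto simp: S0_def f1_def f2_def f3_def k1_def k2_def k3_def)

lemma scaled_R0_less_k1: "f1 + f2 * th / k2 + f3 * th * (dl + p) / (k2 * k3) + f3 * dl / k3 < k1"
proof -
  have "(f1 + f2 * th / k2 + f3 * th * (dl + p) / (k2 * k3) + f3 * dl / k3) / k1 < 1"
    using R0 rates_pos unfolding f1_def f2_def f3_def k1_def k2_def k3_def
    by (simp add: add_divide_distrib mult_ac)
  then show ?thesis
    using rates_pos by simp
qed

text \<open>The Jacobian of \<open>(I1, I2, A)\<close> at the disease-free equilibrium, where \<open>S / N = 1\<close>.\<close>
definition infection_matrix :: "nat \<Rightarrow> nat \<Rightarrow> real" where
  "infection_matrix i j = [[f1 - k1, f2, f3], [th, - k2, 0], [dl, dl + p, - k3]] ! i ! j"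

lemma infection_matrix_metzler:
  "i \<in> {0, 1, 2} \<Longrightarrow> j \<in> {0, 1, 2} \<Longrightarrow> i \<noteq> j \<Longrightarrow> infection_matrix i j \<ge> 0"
  using rates_pos pos by (auto simp: infection_matrix_def)

lemma infection_matrix_stability_vectors:
  obtains v w :: "nat \<Rightarrow> real"
  where "\<And>i. i \<in> {0, 1, 2} \<Longrightarrow> v i > 0" "\<And>i. i \<in> {0, 1, 2} \<Longrightarrow> w i > 0"
    "\<And>i. i \<in> {0, 1, 2} \<Longrightarrow> (\<Sum>j\<in>{0, 1, 2}. infection_matrix i j * v j) < 0"
    "\<And>i. i \<in> {0, 1, 2} \<Longrightarrow> (\<Sum>j\<in>{0, 1, 2}. w j * infection_matrix j i) < 0"
proof -
  define gap where "gap = k1 - (f1 + f2 * th / k2 + f3 * th * (dl + p) / (k2 * k3) + f3 * dl / k3)"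
    \<comment> \<open>\<open>gap = k1 * (1 - R0)\<close>\<close>
  define G where "G = th / k2 + th * (dl + p) / (k2 * k3) + dl / k3"
  define H where "H = f2 / k2 + f3 * (dl + p) / (k2 * k3) + f3 / k3"
  define \<epsilon> where "\<epsilon> = gap / (G + H + 1)"
  have "gap > 0" "G \<ge> 0" "H \<ge> 0"
    using scaled_R0_less_k1 rates_pos pos unfolding gap_def G_def H_def by auto
  then have "\<epsilon> > 0" "\<epsilon> * G < gap" "\<epsilon> * H < gap"
    unfolding \<epsilon>_def by (auto simp: field_simps intro!: add_pos_nonneg)
  define v where "v i = [1, (th + \<epsilon>) / k2, (dl + (dl + p) * (th + \<epsilon>) / k2 + \<epsilon>) / k3] ! i" for i
  define w where "w i = [1, (f2 + (dl + p) * (f3 + \<epsilon>) / k3 + \<epsilon>) / k2, (f3 + \<epsilon>) / k3] ! i" for i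
  have rows: "(\<Sum>j\<in>{0, 1, 2}. infection_matrix 0 j * v j) = \<epsilon> * H - gap"
    "(\<Sum>j\<in>{0, 1, 2}. infection_matrix 1 j * v j) = - \<epsilon>"
    "(\<Sum>j\<in>{0, 1, 2}. infection_matrix 2 j * v j) = - \<epsilon>"
    using rates_pos
    by (simp_all only: sum_three) (simp_all add: infection_matrix_def v_def gap_def H_def field_simps)
  have cols: "(\<Sum>j\<in>{0, 1, 2}. w j * infection_matrix j 0) = \<epsilon> * G - gap"
    "(\<Sum>j\<in>{0, 1, 2}. w j * infection_matrix j 1) = - \<epsilon>"
    "(\<Sum>j\<in>{0, 1, 2}. w j * infection_matrix j 2) = - \<epsilon>"
    using rates_pos
    by (simp_all only: sum_three) (simp_all add: infection_matrix_def w_def gap_def G_def field_simps)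
  show thesis
  proof
    show "v i > 0" "w i > 0" if "i \<in> {0, 1, 2}" for i
      using that rates_pos pos \<open>\<epsilon> > 0\<close>
      by (auto simp: v_def w_def
          intro!: divide_pos_pos divide_nonneg_pos add_nonneg_pos add_nonneg_nonneg mult_nonneg_nonneg)
    show "(\<Sum>j\<in>{0, 1, 2}. infection_matrix i j * v j) < 0"
      "(\<Sum>j\<in>{0, 1, 2}. w j * infection_matrix j i) < 0" if "i \<in> {0, 1, 2}" for i
      using that rows cols \<open>\<epsilon> > 0\<close> \<open>\<epsilon> * G < gap\<close> \<open>\<epsilon> * H < gap\<close> by auto
  qed
qed

lemma infection_form_negative_definite:
  obtains d1 d2 d3 \<kappa> :: real where "d1 > 0" "d2 > 0" "d3 > 0" "\<kappa> > 0"
    "\<And>I1 I2 A. d1 * I1 * ((f1 - k1) * I1 + f2 * I2 + f3 * A) + d2 * I2 * (th * I1 - k2 * I2)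
        + d3 * A * (dl * I1 + (dl + p) * I2 - k3 * A) \<le> - \<kappa> * (I1^2 + I2^2 + A^2)"
proof -
  obtain v w :: "nat \<Rightarrow> real" where v: "\<And>i. i \<in> {0, 1, 2} \<Longrightarrow> v i > 0"
    and w: "\<And>i. i \<in> {0, 1, 2} \<Longrightarrow> w i > 0"
    and rows: "\<And>i. i \<in> {0, 1, 2} \<Longrightarrow> (\<Sum>j\<in>{0, 1, 2}. infection_matrix i j * v j) < 0"
    and cols: "\<And>i. i \<in> {0, 1, 2} \<Longrightarrow> (\<Sum>j\<in>{0, 1, 2}. w j * infection_matrix j i) < 0"
    using infection_matrix_stability_vectors by blast
  obtain \<kappa> where "\<kappa> > 0" and form: "\<And>y. (\<Sum>i\<in>{0, 1, 2}. w i / v i * y i *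
      (\<Sum>j\<in>{0, 1, 2}. infection_matrix i j * y j)) \<le> - \<kappa> * (\<Sum>i\<in>{0, 1, 2}. y i^2)"
    using metzler_diagonal_lyapunov[of "{0, 1, 2}" v w infection_matrix] v w rows cols
      infection_matrix_metzler by blast
  show thesis
  proof (rule that[of "w 0 / v 0" "w 1 / v 1" "w 2 / v 2" \<kappa>])
    show "w 0 / v 0 > 0" "w 1 / v 1 > 0" "w 2 / v 2 > 0"
      using v w by simp_all
    fix I1 I2 A :: real
    show "w 0 / v 0 * I1 * ((f1 - k1) * I1 + f2 * I2 + f3 * A) + w 1 / v 1 * I2 * (th * I1 - k2 * I2)
        + w 2 / v 2 * A * (dl * I1 + (dl + p) * I2 - k3 * A) \<le> - \<kappa> * (I1^2 + I2^2 + A^2)"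
      using form[of "\<lambda>i. [I1, I2, A] ! i"]
      by (simp add: sum_three infection_matrix_def add.assoc add_diff_eq)
  qed (rule \<open>\<kappa> > 0\<close>)
qed

lemma hiv_field_eq:
  "F (S, I1, I2, A) =
    (mu * (S0 - S) - S / (S + I1 + I2 + A) * (f1 * I1 + f2 * I2 + f3 * A),
     S / (S + I1 + I2 + A) * (f1 * I1 + f2 * I2 + f3 * A) - k1 * I1,
     th * I1 - k2 * I2,
     dl * I1 + (dl + p) * I2 - k3 * A)"
proof -
  have force: "(1 - u1) * (b1 * c1 * I1 + b2 * c2 * I2 + b3 * c3 * A) = f1 * I1 + f2 * I2 + f3 * A"
    by (simp add: f1_def f2_def f3_def algebra_simps)
  show ?thesis
    unfolding hiv_field_def Let_def prod.case force
    using pos by (simp add: S0_def k1_def k2_def k3_def algebra_simps add_divide_distrib)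
qed

lemma hiv_field_equilibrium: "F (S0, 0, 0, 0) = 0"
  using pos by (simp add: hiv_field_def S0_def zero_prod_def)

lemma susceptible_fraction_near_one:
  assumes close: "dist (S, I1, I2, A) (S0, 0, 0, 0) \<le> \<eta>" and small: "\<eta> \<le> S0 / 8"
  shows "\<bar>S / (S + I1 + I2 + A) - 1\<bar> \<le> 6 * \<eta> / S0"
proof -
  have "\<eta> \<ge> 0"
    using close zero_le_dist order_trans by blast
  have "(S - S0)^2 + I1^2 + I2^2 + A^2 \<le> \<eta>^2"
    using power_mono[OF close zero_le_dist, of 2] dist_state_sq[of S I1 I2 A S0 0 0 0] by simp
  moreover have "0 \<le> (S - S0)^2" "0 \<le> I1^2" "0 \<le> I2^2" "0 \<le> A^2"
    by simp_all
  ultimately have "(S - S0)^2 \<le> \<eta>^2" "I1^2 \<le> \<eta>^2" "I2^2 \<le> \<eta>^2" "A^2 \<le> \<eta>^2"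
    by linarith+
  then have "\<bar>S - S0\<bar> \<le> \<eta>" "\<bar>I1\<bar> \<le> \<eta>" "\<bar>I2\<bar> \<le> \<eta>" "\<bar>A\<bar> \<le> \<eta>"
    using \<open>\<eta> \<ge> 0\<close> by (simp_all add: abs_le_square_iff[of _ \<eta>, symmetric])
  then have N: "S + I1 + I2 + A \<ge> S0 / 2" and infected: "\<bar>I1 + I2 + A\<bar> \<le> 3 * \<eta>"
    using small by linarith+
  have "S / (S + I1 + I2 + A) - 1 = - (I1 + I2 + A) / (S + I1 + I2 + A)"
    using N rates_pos by (simp add: field_simps)
  then have "\<bar>S / (S + I1 + I2 + A) - 1\<bar> = \<bar>I1 + I2 + A\<bar> / (S + I1 + I2 + A)"
    using N rates_pos by simp
  also have "\<dots> \<le> 3 * \<eta> / (S0 / 2)"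
    using N infected rates_pos \<open>\<eta> \<ge> 0\<close> by (intro frac_le) auto
  finally show ?thesis
    by simp
qed

end

locale hiv_lyapunov = hiv_model +
  fixes d1 d2 d3 \<kappa> :: real
  assumes weights_pos: "d1 > 0" "d2 > 0" "d3 > 0" and \<kappa>_pos: "\<kappa> > 0"
    and infection_form: "\<And>I1 I2 A. d1 * I1 * ((f1 - k1) * I1 + f2 * I2 + f3 * A)
      + d2 * I2 * (th * I1 - k2 * I2) + d3 * A * (dl * I1 + (dl + p) * I2 - k3 * A)
      \<le> - \<kappa> * (I1^2 + I2^2 + A^2)"
begin

text \<open>\<open>K\<close> is small enough for the cross term between \<open>S - S0\<close> and the force of infection to be
  absorbed, and \<open>\<rho>\<close> keeps \<open>S / N\<close> so close to 1 that the remaining perturbation is absorbed by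
  the infection form.\<close>
definition "C = f1^2 + f2^2 + f3^2"
definition "K = mu * \<kappa> / (8 * (1 + C))"
definition "\<rho> = min (S0 / 8) (\<kappa> * S0 / (12 * d1 * (1 + C)))"
definition "c = min mu (\<kappa> / (d1 + d2 + d3))"

lemma constants_pos: "C \<ge> 0" "K > 0" "\<rho> > 0" "c > 0"
proof -
  show "C \<ge> 0"
    unfolding C_def by simp
  then show "K > 0" "\<rho> > 0"
    unfolding K_def \<rho>_def using pos rates_pos \<kappa>_pos weights_pos by simp_all
  show "c > 0"
    unfolding c_def using pos \<kappa>_pos weights_pos by simp
qed

definition lyap :: "state \<Rightarrow> real" where
  "lyap z = K * (fst z - S0)^2 + d1 * (fst (snd z))^2 + d2 * (fst (snd (snd z)))^2
    + d3 * (snd (snd (snd z)))^2"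

definition lyap_deriv :: "state \<Rightarrow> state \<Rightarrow> real" where
  "lyap_deriv z h = 2 * K * (fst z - S0) * fst h + 2 * d1 * fst (snd z) * fst (snd h)
    + 2 * d2 * fst (snd (snd z)) * fst (snd (snd h)) + 2 * d3 * snd (snd (snd z)) * snd (snd (snd h))"

lemma has_derivative_lyap: "(lyap has_derivative lyap_deriv z) (at z)"
  unfolding lyap_def[abs_def] lyap_deriv_def
  by (auto intro!: derivative_eq_intros simp: algebra_simps)

lemma lyap_bounds:
  "min K (min d1 (min d2 d3)) * (dist z (S0, 0, 0, 0))^2 \<le> lyap z"
  "lyap z \<le> (K + d1 + d2 + d3) * (dist z (S0, 0, 0, 0))^2"
proof -
  obtain S I1 I2 A where z: "z = (S, I1, I2, A)"
    by (cases z) auto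
  define m where "m = min K (min d1 (min d2 d3))"
  have "m * (S - S0)^2 \<le> K * (S - S0)^2" "m * I1^2 \<le> d1 * I1^2"
    "m * I2^2 \<le> d2 * I2^2" "m * A^2 \<le> d3 * A^2"
    unfolding m_def by (intro mult_right_mono; simp)+
  then show "m * (dist z (S0, 0, 0, 0))^2 \<le> lyap z"
    unfolding z dist_state_sq lyap_def by (simp add: algebra_simps)
  have "K * (S - S0)^2 \<le> (K + d1 + d2 + d3) * (S - S0)^2"
    "d1 * I1^2 \<le> (K + d1 + d2 + d3) * I1^2" "d2 * I2^2 \<le> (K + d1 + d2 + d3) * I2^2"
    "d3 * A^2 \<le> (K + d1 + d2 + d3) * A^2"
    using constants_pos weights_pos by (intro mult_right_mono; simp)+
  then show "lyap z \<le> (K + d1 + d2 + d3) * (dist z (S0, 0, 0, 0))^2"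
    unfolding z dist_state_sq lyap_def by (simp add: algebra_simps)
qed

lemma lyap_deriv_field_eq:
  assumes "r = S / (S + I1 + I2 + A)" and "Phi = f1 * I1 + f2 * I2 + f3 * A"
  shows "lyap_deriv (S, I1, I2, A) (F (S, I1, I2, A)) =
    2 * K * (S - S0) * (- mu * (S - S0) - r * Phi)
    + 2 * (d1 * I1 * ((f1 - k1) * I1 + f2 * I2 + f3 * A) + d2 * I2 * (th * I1 - k2 * I2)
        + d3 * A * (dl * I1 + (dl + p) * I2 - k3 * A))
    + 2 * d1 * I1 * ((r - 1) * Phi)"
  unfolding hiv_field_eq lyap_deriv_def assms by (simp add: algebra_simps)

lemma lyap_dominated:
  "- K * mu * (S - S0)^2 - \<kappa> * (I1^2 + I2^2 + A^2) \<le> - c * lyap (S, I1, I2, A)"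
proof -
  have "c * (K * (S - S0)^2) \<le> mu * (K * (S - S0)^2)"
    using constants_pos by (intro mult_right_mono) (auto simp: c_def)
  moreover have "c * (d1 * I1^2 + d2 * I2^2 + d3 * A^2) \<le> \<kappa> * (I1^2 + I2^2 + A^2)"
  proof -
    have "c \<le> \<kappa> / (d1 + d2 + d3)"
      by (simp add: c_def)
    then have c_sum: "c * (d1 + d2 + d3) \<le> \<kappa>"
      using weights_pos by (simp add: le_divide_eq)
    have "d1 * I1^2 + d2 * I2^2 + d3 * A^2 \<le> (d1 + d2 + d3) * (I1^2 + I2^2 + A^2)"
      using weights_pos by (simp add: algebra_simps)
    then have "c * (d1 * I1^2 + d2 * I2^2 + d3 * A^2) \<le> c * (d1 + d2 + d3) * (I1^2 + I2^2 + A^2)"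
      using constants_pos by (simp add: mult_left_mono mult.assoc)
    also have "\<dots> \<le> \<kappa> * (I1^2 + I2^2 + A^2)"
      using c_sum by (intro mult_right_mono) auto
    finally show ?thesis .
  qed
  ultimately show ?thesis
    unfolding lyap_def by (simp add: algebra_simps)
qed

lemma susceptible_fraction_bounds:
  assumes "dist (S, I1, I2, A) (S0, 0, 0, 0) < \<rho>"
  shows "\<bar>S / (S + I1 + I2 + A)\<bar> \<le> 2" "d1 * \<bar>S / (S + I1 + I2 + A) - 1\<bar> * (1 + C) \<le> \<kappa> / 2"
proof -
  have close: "\<bar>S / (S + I1 + I2 + A) - 1\<bar> \<le> 6 * \<rho> / S0"
    using assms by (intro susceptible_fraction_near_one) (auto simp: \<rho>_def)
  moreover have "6 * \<rho> / S0 \<le> 1"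
    using rates_pos by (simp add: \<rho>_def field_simps)
  ultimately show "\<bar>S / (S + I1 + I2 + A)\<bar> \<le> 2"
    by linarith
  have "\<rho> \<le> \<kappa> * S0 / (12 * d1 * (1 + C))"
    by (simp add: \<rho>_def)
  then have "\<rho> * (12 * d1 * (1 + C)) \<le> \<kappa> * S0"
    using weights_pos constants_pos by (simp add: le_divide_eq)
  then have "d1 * (6 * \<rho> / S0) * (1 + C) \<le> \<kappa> / 2"
    using rates_pos by (simp add: field_simps)
  moreover have "d1 * \<bar>S / (S + I1 + I2 + A) - 1\<bar> * (1 + C) \<le> d1 * (6 * \<rho> / S0) * (1 + C)"
    using close weights_pos constants_pos by (intro mult_right_mono mult_left_mono) auto
  ultimately show "d1 * \<bar>S / (S + I1 + I2 + A) - 1\<bar> * (1 + C) \<le> \<kappa> / 2"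
    by linarith
qed

lemma lyap_decay:
  assumes close: "dist z (S0, 0, 0, 0) < \<rho>"
  shows "lyap_deriv z (F z) \<le> - c * lyap z"
proof -
  obtain S I1 I2 A where z: "z = (S, I1, I2, A)"
    by (cases z) auto
  define r where "r = S / (S + I1 + I2 + A)"
  define Phi where "Phi = f1 * I1 + f2 * I2 + f3 * A"
  have Phi_bound: "Phi^2 \<le> C * (I1^2 + I2^2 + A^2)"
    using Cauchy_Schwarz_ineq[of "(f1, f2, f3)" "(I1, I2, A)"]
    by (simp add: Phi_def C_def inner_Pair power2_eq_square algebra_simps)
  have K_small: "8 * K * C \<le> mu * \<kappa>"
    unfolding K_def using constants_pos pos \<kappa>_pos by (simp add: field_simps)
  note r_bounds = susceptible_fraction_bounds[OF close[unfolded z], folded r_def]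
  have "lyap_deriv z (F z) \<le> - K * mu * (S - S0)^2 - \<kappa> * (I1^2 + I2^2 + A^2)"
    unfolding z lyap_deriv_field_eq[OF r_def Phi_def] using weights_pos constants_pos
    by (intro perturbed_lyapunov_estimate[OF _ pos(12) _ infection_form Phi_bound _ r_bounds(1)
          K_small r_bounds(2)]) auto
  also have "\<dots> \<le> - c * lyap z"
    unfolding z by (rule lyap_dominated)
  finally show ?thesis .
qed

theorem disease_free_equilibrium_stable_of_weights:
  "locally_asymptotically_stable F (S0, 0, 0, 0)"
proof -
  interpret exponential_lyapunov F "(S0, 0, 0, 0)" lyap lyap_deriv
    "min K (min d1 (min d2 d3))" "K + d1 + d2 + d3" \<rho> c
    using hiv_field_equilibrium lyap_bounds has_derivative_lyap lyap_decay constants_pos weights_pos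
    by unfold_locales auto
  show ?thesis
    by (rule locally_asymptotically_stable_equilibrium)
qed

end

theorem (in hiv_model) disease_free_equilibrium_stable:
  "locally_asymptotically_stable F (S0, 0, 0, 0)"
proof -
  obtain d1 d2 d3 \<kappa> where "d1 > 0" "d2 > 0" "d3 > 0" "\<kappa> > 0"
    and "\<And>I1 I2 A. d1 * I1 * ((f1 - k1) * I1 + f2 * I2 + f3 * A) + d2 * I2 * (th * I1 - k2 * I2)
        + d3 * A * (dl * I1 + (dl + p) * I2 - k3 * A) \<le> - \<kappa> * (I1^2 + I2^2 + A^2)"
    using infection_form_negative_definite by blast
  then interpret hiv_lyapunov Q0 b1 b2 b3 c1 c2 c3 th p dl al mu u1 d1 d2 d3 \<kappa>
    by unfold_locales
  show ?thesis
    by (rule disease_free_equilibrium_stable_of_weights)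
qed

theorem theorem4:
  fixes Q0 b1 b2 b3 c1 c2 c3 th p dl al mu u1 :: real
  assumes pos: "Q0 > 0" "b1 > 0" "b2 > 0" "b3 > 0" "c1 > 0" "c2 > 0" "c3 > 0"
      "th > 0" "p > 0" "dl > 0" "al > 0" "mu > 0"
    and u1: "0 \<le> u1" "u1 \<le> 1"
    and R0: "(1 - u1) * b1 * c1 / (th + dl + mu)
           + (1 - u1) * b2 * c2 * th / ((th + dl + mu) * (dl + mu + p))
           + (1 - u1) * b3 * c3 * th * (dl + p) / ((th + dl + mu) * (dl + mu + p) * (al + mu))
           + (1 - u1) * b3 * c3 * dl / ((th + dl + mu) * (al + mu)) < 1"
  shows "locally_asymptotically_stable (hiv_field Q0 b1 b2 b3 c1 c2 c3 th p dl al mu u1)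
           (Q0 / mu, 0, 0, 0)"
proof -
  interpret hiv_model Q0 b1 b2 b3 c1 c2 c3 th p dl al mu u1
    using assms by unfold_locales
  show ?thesis
    using disease_free_equilibrium_stable by (simp add: S0_def)
qed

end
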